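(* Let $J=V+\sqrt{-1}S$ be a complex positive semidefinite matrix with $V=\mathrm{Re}\,J$ strictly positive. Then $J\#J^\top=V^{1/2}\{I+(V^{-1/2}SV^{-1/2})^2\}^{1/2}V^{1/2}$.
   Context: $P\#Q$ is the operator geometric mean: $P^{1/2}(P^{-1/2}QP^{-1/2})^{1/2}P^{1/2}$ for positive definite $P,Q$ and $\lim_{\epsilon\downarrow0}(P+\epsilon I)\#(Q+\epsilon I)$ for positive semidefinite $P,Q$. *)

theory Defs
  imports "HOL-Analysis.Analysis"
begin

definition cadj :: "complex^'n^'n \<Rightarrow> complex^'n^'n" where
  "cadj A = (\<chi> i j. cnj (A $ j $ i))"

definition cquad :: "complex^'n^'n \<Rightarrow> complex^'n \<Rightarrow> complex" where
  "cquad A x = (\<Sum>i\<in>UNIV. cnj (x $ i) * ((A *v x) $ i))"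

definition psd :: "complex^'n^'n \<Rightarrow> bool" where
  "psd A \<longleftrightarrow> cadj A = A \<and> (\<forall>x. 0 \<le> Re (cquad A x))"

definition pd :: "complex^'n^'n \<Rightarrow> bool" where
  "pd A \<longleftrightarrow> cadj A = A \<and> (\<forall>x. x \<noteq> 0 \<longrightarrow> 0 < Re (cquad A x))"

definition msqrt :: "complex^'n^'n \<Rightarrow> complex^'n^'n" where
  "msqrt A = (THE B. psd B \<and> B ** B = A)"

definition gmean_pd :: "complex^'n^'n \<Rightarrow> complex^'n^'n \<Rightarrow> complex^'n^'n" where
  "gmean_pd P Q =
     (let R = msqrt P; Ri = matrix_inv R in R ** msqrt (Ri ** Q ** Ri) ** R)"

definition gmean :: "complex^'n^'n \<Rightarrow> complex^'n^'n \<Rightarrow> complex^'n^'n" where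
  "gmean P Q = (if pd P \<and> pd Q then gmean_pd P Q
     else Lim (at_right (0::real))
            (\<lambda>e. gmean_pd (P + mat (complex_of_real e)) (Q + mat (complex_of_real e))))"

definition mRe :: "complex^'n^'n \<Rightarrow> complex^'n^'n" where
  "mRe A = (\<chi> i j. complex_of_real (Re (A $ i $ j)))"

definition mIm :: "complex^'n^'n \<Rightarrow> complex^'n^'n" where
  "mIm A = (\<chi> i j. complex_of_real (Im (A $ i $ j)))"

end

theory Submission
  imports Defs
begin

text \<open>Write V = T^2 with T = V^(1/2), K = T^(-1) S T^(-1) and H = i K. As J is Hermitian,
  J = T (I + H) T and J^T = conj J = T (I - H) T with H Hermitian, so positivity of J and J^T
  gives -I \<le> H \<le> I, and I + K^2 = I - H^2. If J is invertible, Y = T (I - H^2)^(1/2) T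
  is positive and, since (I - H^2)^(1/2) commutes with H, solves the Riccati equation
  Y J^(-1) Y = J^T, whose unique positive solution is J # J^T. In general J + e I is invertible
  with real part V + e I for e > 0, and the formula passes to the limit e \<rightarrow> 0 because
  the matrix square root and the inverse are continuous. Square roots come from the spectral
  theorem, proved by maximising the Rayleigh quotient and deflating with Householder
  reflections.\<close>

lemma cadj_nth [simp]: "cadj A $ i $ j = cnj (A $ j $ i)"
  by (simp add: cadj_def)

lemma cadj_cadj [simp]: "cadj (cadj A) = A"
  by (simp add: vec_eq_iff)

lemma cadj_mult: "cadj (A ** B) = cadj B ** cadj A"
  by (simp add: vec_eq_iff matrix_matrix_mult_def mult.commute)

lemma cadj_add: "cadj (A + B) = cadj A + cadj B"
  by (simp add: vec_eq_iff)

lemma cadj_diff: "cadj (A - B) = cadj A - cadj B"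
  by (simp add: vec_eq_iff)

lemma cadj_mat [simp]: "cadj (mat c) = mat (cnj c)"
  by (simp add: vec_eq_iff mat_def)

lemma hermitian_entry: "cadj A = A \<Longrightarrow> A $ i $ j = cnj (A $ j $ i)"
  by (metis cadj_nth)

lemma psd_hermitian: "psd A \<Longrightarrow> cadj A = A"
  by (simp add: psd_def)

lemma pd_imp_psd:
  assumes "pd A"
  shows "psd A"
  unfolding psd_def
proof (intro conjI allI)
  show "cadj A = A" using assms by (simp add: pd_def)
  show "0 \<le> Re (cquad A x)" for x
    using assms by (cases "x = 0") (auto simp: pd_def cquad_def less_imp_le)
qed

lemma matrix_add_rdistrib: "(A + B) ** C = A ** C + B ** (C :: 'a::semiring_1^'n^'n)"
  by (simp add: vec_eq_iff matrix_matrix_mult_def distrib_right sum.distrib)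

lemma matrix_diff_ldistrib: "C ** (A - B) = C ** A - C ** (B :: 'a::ring_1^'n^'n)"
  by (simp add: vec_eq_iff matrix_matrix_mult_def right_diff_distrib sum_subtractf)

lemma matrix_diff_rdistrib: "(A - B) ** C = A ** C - B ** (C :: 'a::ring_1^'n^'n)"
  by (simp add: vec_eq_iff matrix_matrix_mult_def left_diff_distrib sum_subtractf)

lemma mat_matrix_mult_nth: "(mat c ** A) $ i $ j = c * (A :: 'a::semiring_1^'n^'n) $ i $ j"
proof -
  have "(mat c ** A) $ i $ j = (\<Sum>k\<in>UNIV. if k = i then c * A $ k $ j else 0)"
    unfolding matrix_matrix_mult_def vec_lambda_beta by (intro sum.cong) (auto simp: mat_def)
  then show ?thesis by simp
qed

lemma matrix_mat_mult_nth: "(A ** mat c) $ i $ j = (A :: 'a::semiring_1^'n^'n) $ i $ j * c"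
proof -
  have "(A ** mat c) $ i $ j = (\<Sum>k\<in>UNIV. if k = j then A $ i $ k * c else 0)"
    unfolding matrix_matrix_mult_def vec_lambda_beta by (intro sum.cong) (auto simp: mat_def)
  then show ?thesis by simp
qed

lemma mat_commute: "A ** mat c = mat c ** (A :: 'a::comm_semiring_1^'n^'n)"
  by (simp add: vec_eq_iff mat_matrix_mult_nth matrix_mat_mult_nth mult.commute)

lemma matrix_nth_axis: "A $ i $ j = (A *v axis j 1) $ i"
  by (simp add: matrix_vector_mult_def axis_def if_distrib cong: if_cong)

lemma mat_matrix_vector_mult: "mat c *v x = c *s (x :: 'a::semiring_1^'n)"
proof -
  have "(mat c *v x) $ i = (\<Sum>j\<in>UNIV. if j = i then c * x $ j else 0)" for i
    unfolding matrix_vector_mult_def vec_lambda_beta by (intro sum.cong) (auto simp: mat_def)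
  then show ?thesis by (simp add: vec_eq_iff)
qed

definition cinner :: "complex^'n \<Rightarrow> complex^'n \<Rightarrow> complex" where
  "cinner x y = (\<Sum>i\<in>UNIV. cnj (x $ i) * y $ i)"

lemma cquad_cinner: "cquad A x = cinner x (A *v x)"
  by (simp add: cquad_def cinner_def)

lemma cinner_add_left: "cinner (x + y) z = cinner x z + cinner y z"
  by (simp add: cinner_def distrib_right sum.distrib)

lemma cinner_add_right: "cinner z (x + y) = cinner z x + cinner z y"
  by (simp add: cinner_def distrib_left sum.distrib)

lemma cinner_diff_left: "cinner (x - y) z = cinner x z - cinner y z"
  by (simp add: cinner_def left_diff_distrib sum_subtractf)

lemma cinner_diff_right: "cinner z (x - y) = cinner z x - cinner z y"
  by (simp add: cinner_def right_diff_distrib sum_subtractf)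

lemma cinner_scaleC_left: "cinner (c *s x) z = cnj c * cinner x z"
  by (simp add: cinner_def sum_distrib_left mult.assoc)

lemma cinner_scaleC_right: "cinner z (c *s x) = c * cinner z x"
  by (simp add: cinner_def sum_distrib_left mult.left_commute)

lemma cnj_cinner: "cnj (cinner x y) = cinner y x"
  by (simp add: cinner_def mult.commute)

lemma cinner_zero_right [simp]: "cinner x 0 = 0"
  by (simp add: cinner_def)

lemma cinner_axis_left: "cinner (axis i c) z = cnj c * z $ i"
proof -
  have "cinner (axis i c) z = (\<Sum>j\<in>UNIV. if j = i then cnj c * z $ j else 0)"
    unfolding cinner_def by (rule sum.cong) (auto simp: axis_def)
  then show ?thesis by simp
qed

lemma cinner_axis_right: "cinner z (axis i c) = cnj (z $ i) * c"
  using cnj_cinner[of "axis i c" z] by (simp add: cinner_axis_left mult.commute)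

lemma cinner_cadj: "cinner x (A *v y) = cinner (cadj A *v x) y"
proof -
  have "cinner x (A *v y) = (\<Sum>i\<in>UNIV. \<Sum>j\<in>UNIV. cnj (x $ i) * A $ i $ j * y $ j)"
    by (simp add: cinner_def matrix_vector_mult_def sum_distrib_left mult.assoc)
  also have "\<dots> = (\<Sum>j\<in>UNIV. \<Sum>i\<in>UNIV. cnj (x $ i) * A $ i $ j * y $ j)"
    by (rule sum.swap)
  also have "\<dots> = (\<Sum>j\<in>UNIV. (\<Sum>i\<in>UNIV. cnj (x $ i) * A $ i $ j) * y $ j)"
    by (simp add: sum_distrib_right)
  also have "\<dots> = cinner (cadj A *v x) y"
    by (simp add: cinner_def matrix_vector_mult_def mult.commute)
  finally show ?thesis .
qed

lemma hermitian_cinner: "cadj A = A \<Longrightarrow> cinner x (A *v y) = cinner (A *v x) y"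
  by (metis cinner_cadj)

lemma cinner_self: "cinner x x = complex_of_real (\<Sum>i\<in>UNIV. (cmod (x $ i))\<^sup>2)"
  unfolding cinner_def of_real_sum
  by (rule sum.cong) (simp_all add: complex_norm_square mult.commute del: of_real_power)

lemma norm_sq_cinner: "(norm (x :: complex^'n))\<^sup>2 = Re (cinner x x)"
  unfolding norm_vec_def L2_set_def by (simp add: cinner_self sum_nonneg)

lemma cinner_self_pos: "x \<noteq> 0 \<Longrightarrow> 0 < Re (cinner x x)"
  by (simp flip: norm_sq_cinner)

lemma cinner_self_eq_0: "cinner x x = 0 \<longleftrightarrow> x = 0"
proof
  show "cinner x x = 0 \<Longrightarrow> x = 0"
    using cinner_self_pos[of x] by (cases "x = 0") auto
qed (simp add: cinner_def)

lemma cquad_congruence: "cquad (cadj T ** A ** T) x = cquad A (T *v x)"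
  by (simp add: cquad_cinner cinner_cadj matrix_vector_mul_assoc[symmetric])

lemma matrix_vector_mult_scaleC: "A *v (c *s x) = c *s (A *v (x :: complex^'n))"
  by (simp add: vec_eq_iff matrix_vector_mult_def sum_distrib_left mult_ac)

lemma scaleR_eq_scaleC: "r *\<^sub>R x = complex_of_real r *s (x :: complex^'n)"
  by (simp add: vec_eq_iff scaleR_conv_of_real[where 'a = complex])

lemma cquad_scaleR: "cquad A (r *\<^sub>R x) = complex_of_real (r\<^sup>2) * cquad A x"
  unfolding scaleR_eq_scaleC
  by (simp add: cquad_cinner matrix_vector_mult_scaleC cinner_scaleC_left cinner_scaleC_right
        power2_eq_square)

lemma cquad_add_scaleR:
  assumes "cadj A = A"
  shows "Re (cquad A (x + t *\<^sub>R y)) =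
    Re (cquad A x) + t\<^sup>2 * Re (cquad A y) + 2 * t * Re (cinner y (A *v x))"
proof -
  have swap: "cinner x (A *v y) = cnj (cinner y (A *v x))"
    using hermitian_cinner[OF assms] cnj_cinner by metis
  have "cquad A (x + t *\<^sub>R y) = cquad A x + complex_of_real t * cinner x (A *v y)
      + complex_of_real t * cinner y (A *v x) + complex_of_real t * complex_of_real t * cquad A y"
    unfolding scaleR_eq_scaleC cquad_cinner
    by (simp add: matrix_vector_right_distrib matrix_vector_mult_scaleC cinner_add_left
        cinner_add_right cinner_scaleC_left cinner_scaleC_right algebra_simps)
  then show ?thesis by (simp add: swap power2_eq_square)
qed

lemma nonneg_quadratic_imp_linear_coeff_0:
  fixes a b :: real
  assumes "\<And>t. 0 \<le> a * t\<^sup>2 + b * t" "0 \<le> a"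
  shows "b = 0"
proof -
  define t where "t = - b / (a + 1)"
  have b: "b = - (a + 1) * t" using assms(2) by (simp add: t_def field_simps)
  have "0 \<le> a * t\<^sup>2 + b * t" by (rule assms(1))
  also have "a * t\<^sup>2 + b * t = - (t\<^sup>2)" by (simp add: b algebra_simps power2_eq_square)
  finally show ?thesis by (simp add: b)
qed

text \<open>Nonnegativity along the lines x + t w forces the term linear in t to vanish.\<close>

lemma nonneg_cquad_zero_imp_orthogonal:
  assumes herm: "cadj A = A"
    and add: "\<And>u v. P u \<Longrightarrow> P v \<Longrightarrow> P (u + v)"
    and scale: "\<And>c u. P u \<Longrightarrow> P (c *s u)"
    and nonneg: "\<And>z. P z \<Longrightarrow> 0 \<le> Re (cquad A z)"
    and "P x" and zero: "Re (cquad A x) = 0" and "P y"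
  shows "cinner y (A *v x) = 0"
proof -
  have Re_zero: "Re (cinner w (A *v x)) = 0" if "P w" for w
  proof -
    have "2 * Re (cinner w (A *v x)) = 0"
    proof (rule nonneg_quadratic_imp_linear_coeff_0)
      fix t :: real
      have "0 \<le> Re (cquad A (x + t *\<^sub>R w))"
        unfolding scaleR_eq_scaleC by (intro nonneg add scale \<open>P x\<close> \<open>P w\<close>)
      then show "0 \<le> Re (cquad A w) * t\<^sup>2 + 2 * Re (cinner w (A *v x)) * t"
        using cquad_add_scaleR[OF herm, of x t w] zero by (simp add: algebra_simps)
    qed (use nonneg \<open>P w\<close> in blast)
    then show ?thesis by simp
  qed
  have "Re (cinner (\<i> *s y) (A *v x)) = 0" using \<open>P y\<close> by (intro Re_zero scale)
  then have "Im (cinner y (A *v x)) = 0" by (simp add: cinner_scaleC_left)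
  with Re_zero[OF \<open>P y\<close>] show ?thesis by (simp add: complex_eq_iff)
qed

lemma psd_cquad_zero_imp_kernel:
  assumes "psd A" "Re (cquad A x) = 0"
  shows "A *v x = 0"
proof -
  have "cinner (A *v x) (A *v x) = 0"
    by (rule nonneg_cquad_zero_imp_orthogonal[where P = "\<lambda>_. True"])
       (use assms in \<open>auto simp: psd_def\<close>)
  then show ?thesis by (simp add: cinner_self_eq_0)
qed

lemma psd_congruence: "psd A \<Longrightarrow> psd (cadj T ** A ** T)"
  by (simp add: psd_def cadj_mult matrix_mul_assoc cquad_congruence)

subsection \<open>Spectral theorem for Hermitian matrices\<close>

definition unitary :: "complex^'n^'n \<Rightarrow> bool" where
  "unitary U \<longleftrightarrow> cadj U ** U = mat 1"

lemma unitary_simps: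
  assumes "unitary U"
  shows "cadj U ** U = mat 1" "U ** cadj U = mat 1"
    "X ** cadj U ** U = X" "X ** U ** cadj U = X"
proof -
  show UU: "cadj U ** U = mat 1" "U ** cadj U = mat 1"
    using assms matrix_left_right_inverse unfolding unitary_def by blast+
  show "X ** cadj U ** U = X" "X ** U ** cadj U = X"
    by (simp_all add: UU flip: matrix_mul_assoc)
qed

lemma unitary_mult: "unitary U \<Longrightarrow> unitary W \<Longrightarrow> unitary (U ** W)"
  unfolding unitary_def cadj_mult by (metis matrix_mul_assoc matrix_mul_lid)

definition householder :: "complex^'n \<Rightarrow> complex^'n^'n" where
  "householder w = (\<chi> a b. (if a = b then 1 else 0) - (2 / cinner w w) * w $ a * cnj (w $ b))"

lemma householder_apply: "householder w *v z = z - ((2 / cinner w w) * cinner w z) *s w"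
proof -
  have "(householder w *v z) $ a = z $ a - ((2 / cinner w w) * cinner w z) * w $ a" for a
  proof -
    have "(householder w *v z) $ a = (\<Sum>b\<in>UNIV. (if a = b then z $ b else 0)
        - (2 / cinner w w) * w $ a * (cnj (w $ b) * z $ b))"
      unfolding matrix_vector_mult_def vec_lambda_beta
      by (rule sum.cong) (auto simp: householder_def left_diff_distrib mult.assoc)
    also have "\<dots> = z $ a - (2 / cinner w w) * w $ a * cinner w z"
      by (simp add: sum_subtractf sum_distrib_left cinner_def)
    finally show ?thesis by (simp add: mult_ac)
  qed
  then show ?thesis by (simp add: vec_eq_iff)
qed

lemma householder_hermitian: "cadj (householder w) = householder w"
  using cnj_cinner[of w w] by (simp add: vec_eq_iff householder_def mult_ac)

lemma householder_involutive:
  assumes "w \<noteq> 0"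
  shows "householder w ** householder w = mat 1"
proof (subst matrix_eq, intro allI)
  fix z
  define q c where "q = cinner w w" and "c = cinner w z"
  have "q \<noteq> 0" using assms by (simp add: q_def cinner_self_eq_0)
  then have reflect: "cinner w (z - ((2 / q) * c) *s w) = - c"
    by (simp add: cinner_diff_right cinner_scaleC_right c_def flip: q_def)
  have "(householder w ** householder w) *v z = householder w *v (householder w *v z)"
    by (simp add: matrix_vector_mul_assoc)
  also have "\<dots> = z"
    unfolding householder_apply q_def[symmetric] c_def[symmetric] reflect
    by (simp add: vec_eq_iff algebra_simps)
  finally show "(householder w ** householder w) *v z = mat 1 *v z" by simp
qed

text \<open>The witness is the reflection in the hyperplane orthogonal to u - v.\<close>

lemma householder_exchange:
  fixes u v :: "complex^'n"
  assumes lengths: "cinner u u = cinner v v" and real: "cnj (cinner u v) = cinner u v"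
  obtains W where "W ** W = mat 1" "cadj W = W" "W *v u = v"
    "\<And>i. u $ i = 0 \<Longrightarrow> v $ i = 0 \<Longrightarrow> W *v axis i 1 = axis i 1"
proof (cases "u = v")
  case True
  show ?thesis by (rule that[of "mat 1"]) (simp_all add: True)
next
  case False
  define w where "w = u - v"
  have "w \<noteq> 0" using False by (simp add: w_def)
  then have q: "cinner w w \<noteq> 0" by (simp add: cinner_self_eq_0)
  have "cinner v u = cinner u v" using real cnj_cinner by metis
  then have "cinner w w = 2 * cinner w u"
    by (simp add: w_def cinner_diff_left cinner_diff_right lengths)
  then have "householder w *v u = v"
    using q by (simp add: householder_apply w_def)
  moreover have "householder w *v axis i 1 = axis i 1" if "u $ i = 0" "v $ i = 0" for i
    using that by (simp add: householder_apply cinner_axis_right w_def)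
  ultimately show ?thesis
    using that householder_involutive[OF \<open>w \<noteq> 0\<close>] householder_hermitian by blast
qed

lemma unimodular_phase: "\<exists>\<alpha>. cnj \<alpha> * \<alpha> = 1 \<and> cnj \<alpha> * z = complex_of_real (cmod z)"
proof (cases "z = 0")
  case False
  define \<alpha> where "\<alpha> = z / complex_of_real (cmod z)"
  have "cnj z * z = complex_of_real (cmod z) * complex_of_real (cmod z)"
    by (metis complex_norm_square mult.commute of_real_mult power2_eq_square)
  then have "cnj \<alpha> * \<alpha> = 1" "cnj \<alpha> * z = complex_of_real (cmod z)"
    using False by (simp_all add: \<alpha>_def)
  then show ?thesis by blast
qed (rule exI[of _ 1], simp)

definition diag_cols :: "'n set \<Rightarrow> complex^'n^'n \<Rightarrow> bool" where
  "diag_cols S M \<longleftrightarrow> (\<forall>a b. a \<noteq> b \<longrightarrow> b \<in> S \<longrightarrow> M $ a $ b = 0)"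

lemma diag_cols_apply_axis:
  assumes "diag_cols S M" "b \<in> S"
  shows "M *v axis b 1 = M $ b $ b *s axis b 1"
proof (subst vec_eq_iff, intro allI)
  fix i
  have "(M *v axis b 1) $ i = M $ i $ b" by (simp only: matrix_nth_axis)
  then show "(M *v axis b 1) $ i = (M $ b $ b *s axis b 1) $ i"
    using assms by (cases "i = b") (auto simp: diag_cols_def axis_def)
qed

lemma diag_cols_insertI:
  assumes "diag_cols S M" "M *v axis b 1 = c *s axis b 1"
  shows "diag_cols (insert b S) M"
  using assms by (auto simp: diag_cols_def matrix_nth_axis[of M] axis_def)

lemma closed_coordinate_subspace: "closed {x :: complex^'n. \<forall>i\<in>S. x $ i = 0}"
proof -
  have "{x :: complex^'n. \<forall>i\<in>S. x $ i = 0} = (\<Inter>i\<in>S. {x. x $ i = 0})" by auto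
  then show ?thesis
    by (simp add: closed_INT closed_Collect_eq continuous_on_component continuous_on_const)
qed

lemma continuous_on_cquad: "continuous_on S (\<lambda>x. Re (cquad D x))"
  unfolding cquad_def matrix_vector_mult_def
  by (intro continuous_on_Re continuous_on_sum continuous_on_mult continuous_on_cnj
      continuous_on_component continuous_on_id continuous_on_const continuous_on_vec_lambda)

lemma cquad_max_on_coordinate_subspace:
  fixes D :: "complex^'n^'n"
  assumes "j \<notin> S"
  obtains x where "\<forall>i\<in>S. x $ i = 0" "norm x = 1"
    "\<And>z. \<forall>i\<in>S. z $ i = 0 \<Longrightarrow> Re (cquad D z) \<le> Re (cquad D x) * Re (cinner z z)"
proof -
  let ?Z = "{x :: complex^'n. \<forall>i\<in>S. x $ i = 0} \<inter> sphere 0 1"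
  let ?f = "\<lambda>x. Re (cquad D x)"
  have "compact ?Z"
    by (intro closed_Int_compact closed_coordinate_subspace compact_sphere)
  moreover have "norm (axis j (1 :: complex)) = 1"
    using norm_sq_cinner[of "axis j 1"] by (simp add: cinner_axis_left)
  then have "axis j 1 \<in> ?Z"
    using assms by (auto simp: axis_def)
  ultimately obtain x where x: "x \<in> ?Z" and max: "\<And>y. y \<in> ?Z \<Longrightarrow> ?f y \<le> ?f x"
    using continuous_attains_sup[of ?Z ?f] continuous_on_cquad by blast
  have "?f z \<le> ?f x * Re (cinner z z)" if z: "\<forall>i\<in>S. z $ i = 0" for z
  proof (cases "z = 0")
    case False
    define n where "n = norm z"
    have "n > 0" using False by (simp add: n_def)
    then have "(1 / n) *\<^sub>R z \<in> ?Z" using z by (auto simp: n_def)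
    then have "?f ((1 / n) *\<^sub>R z) \<le> ?f x" by (rule max)
    then have "(1 / n)\<^sup>2 * ?f z \<le> ?f x" by (simp add: cquad_scaleR del: of_real_power)
    then have "?f z \<le> n\<^sup>2 * ?f x"
      using \<open>n > 0\<close> by (simp add: field_simps)
    then show ?thesis by (simp add: n_def norm_sq_cinner mult.commute)
  qed (simp add: cquad_def cinner_def)
  with x that show ?thesis by auto
qed

text \<open>An eigenvector is found by maximizing the Rayleigh quotient on the coordinate subspace
  orthogonal to the already diagonal columns, which is invariant under D.\<close>

lemma hermitian_eigenvector_on_coordinate_subspace:
  fixes D :: "complex^'n^'n"
  assumes herm: "cadj D = D" and diag: "diag_cols S D" and "j \<notin> S"
  obtains x \<mu> where "\<forall>i\<in>S. x $ i = 0" "norm x = 1" "D *v x = complex_of_real \<mu> *s x"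
proof -
  obtain x where xS: "\<forall>i\<in>S. x $ i = 0" and x1: "norm x = 1"
    and max: "\<And>z. \<forall>i\<in>S. z $ i = 0 \<Longrightarrow> Re (cquad D z) \<le> Re (cquad D x) * Re (cinner z z)"
    using cquad_max_on_coordinate_subspace[OF \<open>j \<notin> S\<close>] by blast
  define \<mu> where "\<mu> = Re (cquad D x)"
  define E where "E = mat (complex_of_real \<mu>) - D"
  have E_apply: "E *v z = complex_of_real \<mu> *s z - D *v z" for z
    by (simp add: E_def matrix_vector_mult_diff_rdistrib mat_matrix_vector_mult)
  have cquad_E: "Re (cquad E z) = \<mu> * Re (cinner z z) - Re (cquad D z)" for z
    by (simp add: cquad_cinner E_apply cinner_diff_right cinner_scaleC_right)
  have "E *v x = 0"
  proof (subst vec_eq_iff, intro allI)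
    fix i
    show "(E *v x) $ i = 0 $ i"
    proof (cases "i \<in> S")
      case False
      have "cinner (axis i 1) (E *v x) = 0"
      proof (rule nonneg_cquad_zero_imp_orthogonal[where P = "\<lambda>z. \<forall>i\<in>S. z $ i = 0"])
        show "cadj E = E" using herm by (simp add: E_def cadj_diff)
        show "Re (cquad E x) = 0"
          using x1 by (simp add: cquad_E \<mu>_def flip: norm_sq_cinner)
      qed (use xS False max in \<open>auto simp: axis_def cquad_E \<mu>_def\<close>)
      then show ?thesis by (simp add: cinner_axis_left)
    next
      case True
      have row: "D $ i $ j * x $ j = 0" for j
        using diag xS True hermitian_entry[OF herm, of i j] by (cases "j = i") (auto simp: diag_cols_def)
      have "(D *v x) $ i = 0"
        unfolding matrix_vector_mult_def by (simp only: vec_lambda_beta row sum.neutral_const)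
      then show ?thesis using xS True by (simp add: E_apply)
    qed
  qed
  then have "D *v x = complex_of_real \<mu> *s x" by (simp add: E_apply)
  with xS x1 that show ?thesis by blast
qed

text \<open>A Householder reflection moving a phase multiple of the unit vector e_j onto an
  eigenvector supported off S fixes e_b for b in S.\<close>

lemma hermitian_diag_cols_extend:
  fixes D :: "complex^'n^'n"
  assumes herm: "cadj D = D" and diag: "diag_cols S D" and "j \<notin> S"
  obtains W where "unitary W" "cadj W = W" "diag_cols (insert j S) (W ** D ** W)"
proof -
  obtain x \<mu> where xS: "\<forall>i\<in>S. x $ i = 0" and x1: "norm x = 1"
    and eigen: "D *v x = complex_of_real \<mu> *s x"
    using hermitian_eigenvector_on_coordinate_subspace[OF herm diag \<open>j \<notin> S\<close>] by blast
  obtain \<alpha> where \<alpha>: "cnj \<alpha> * \<alpha> = 1" "cnj \<alpha> * x $ j = complex_of_real (cmod (x $ j))"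
    using unimodular_phase by blast
  define u where "u = \<alpha> *s axis j 1"
  have "cinner x x = 1"
    using x1 norm_sq_cinner[of x] by (simp add: cinner_self complex_eq_iff)
  then have "cinner u u = cinner x x"
    by (simp add: u_def cinner_scaleC_left cinner_scaleC_right cinner_axis_left \<alpha>(1)
        mult.assoc[symmetric] mult.commute[of \<alpha>])
  moreover have "cnj (cinner u x) = cinner u x"
    by (simp add: u_def cinner_scaleC_left cinner_axis_left \<alpha>(2))
  ultimately obtain W where WW: "W ** W = mat 1" and W: "cadj W = W" and Wu: "W *v u = x"
    and W_axis: "\<And>i. u $ i = 0 \<Longrightarrow> x $ i = 0 \<Longrightarrow> W *v axis i 1 = axis i 1"
    using householder_exchange by blast
  have unitary: "unitary W" using WW W by (simp add: unitary_def)
  have Wx: "W *v x = u" using Wu WW by (metis matrix_vector_mul_assoc matrix_vector_mul_lid)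
  have "(W ** D ** W) *v axis j 1 = (inverse \<alpha> * complex_of_real \<mu> * \<alpha>) *s axis j 1"
  proof -
    have "\<alpha> \<noteq> 0" using \<alpha>(1) by auto
    have "x = \<alpha> *s (W *v axis j 1)" using Wu by (simp add: u_def matrix_vector_mult_scaleC)
    then have "W *v axis j 1 = inverse \<alpha> *s x"
      using \<open>\<alpha> \<noteq> 0\<close> by (simp add: vector_smult_assoc)
    then show ?thesis
      by (simp add: matrix_vector_mul_assoc[symmetric] matrix_vector_mult_scaleC eigen Wx
          vector_smult_assoc u_def mult.assoc)
  qed
  moreover have "diag_cols S (W ** D ** W)"
  proof -
    have "(W ** D ** W) *v axis b 1 = D $ b $ b *s axis b 1" if "b \<in> S" for b
    proof -
      have "b \<noteq> j" using that \<open>j \<notin> S\<close> by auto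
      then have "u $ b = 0" by (simp add: u_def axis_def)
      then have "W *v axis b 1 = axis b 1" using W_axis xS that by blast
      then show ?thesis
        using diag_cols_apply_axis[OF diag that]
        by (simp add: matrix_vector_mul_assoc[symmetric] matrix_vector_mult_scaleC)
    qed
    then show ?thesis by (auto simp: diag_cols_def matrix_nth_axis[of "W ** D ** W"] axis_def)
  qed
  ultimately show ?thesis using that unitary W diag_cols_insertI by blast
qed

theorem hermitian_unitary_diagonalization:
  fixes A :: "complex^'n^'n"
  assumes herm: "cadj A = A"
  obtains U where "unitary U" "diag_cols UNIV (cadj U ** A ** U)"
proof -
  have "\<exists>S U. card S = k \<and> unitary U \<and> diag_cols S (cadj U ** A ** U)" if "k \<le> CARD('n)" for k
    using that
  proof (induction k)
    case 0
    show ?case by (rule exI[of _ "{}"], rule exI[of _ "mat 1"]) (simp add: unitary_def diag_cols_def)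
  next
    case (Suc k)
    then obtain S U where S: "card S = k" and U: "unitary U"
      and diag: "diag_cols S (cadj U ** A ** U)" by auto
    have D: "cadj (cadj U ** A ** U) = cadj U ** A ** U"
      by (simp add: cadj_mult herm matrix_mul_assoc)
    have "S \<noteq> UNIV" using Suc.prems S by auto
    then obtain j where "j \<notin> S" by blast
    obtain W where W: "unitary W" "cadj W = W"
      and diag': "diag_cols (insert j S) (W ** (cadj U ** A ** U) ** W)"
      using hermitian_diag_cols_extend[OF D diag \<open>j \<notin> S\<close>] by blast
    have "W ** (cadj U ** A ** U) ** W = cadj (U ** W) ** A ** (U ** W)"
      by (simp add: cadj_mult W(2) matrix_mul_assoc)
    moreover have "card (insert j S) = Suc k" using \<open>j \<notin> S\<close> S by simp
    ultimately show ?case using diag' unitary_mult[OF U W(1)] by metis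
  qed
  then obtain S U where "card S = CARD('n)" "unitary U" "diag_cols S (cadj U ** A ** U)"
    by blast
  with that show ?thesis by (metis card_eq_UNIV_imp_eq_UNIV finite)
qed

definition diag_mat :: "('n \<Rightarrow> complex) \<Rightarrow> complex^'n^'n" where
  "diag_mat f = (\<chi> a b. if a = b then f a else 0)"

lemma diag_mat_nth: "diag_mat f $ a $ b = (if a = b then f a else 0)"
  by (simp add: diag_mat_def)

lemma matrix_diag_mat_mult_nth: "(G ** diag_mat f) $ i $ j = G $ i $ j * f j"
proof -
  have "(G ** diag_mat f) $ i $ j = (\<Sum>k\<in>UNIV. if k = j then G $ i $ k * f k else 0)"
    unfolding matrix_matrix_mult_def vec_lambda_beta by (intro sum.cong) (auto simp: diag_mat_def)
  then show ?thesis by simp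
qed

lemma diag_mat_matrix_mult_nth: "(diag_mat f ** G) $ i $ j = f i * G $ i $ j"
proof -
  have "(diag_mat f ** G) $ i $ j = (\<Sum>k\<in>UNIV. if k = i then f k * G $ k $ j else 0)"
    unfolding matrix_matrix_mult_def vec_lambda_beta by (intro sum.cong) (auto simp: diag_mat_def)
  then show ?thesis by simp
qed

lemma diag_mat_mult: "diag_mat f ** diag_mat g = diag_mat (\<lambda>i. f i * g i)"
  by (simp add: vec_eq_iff matrix_diag_mat_mult_nth diag_mat_nth)

lemma diag_mat_apply: "(diag_mat f *v y) $ i = f i * y $ i"
proof -
  have "(diag_mat f *v y) $ i = (\<Sum>k\<in>UNIV. if k = i then f k * y $ k else 0)"
    unfolding matrix_vector_mult_def vec_lambda_beta by (intro sum.cong) (auto simp: diag_mat_def)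
  then show ?thesis by simp
qed

lemma psd_diag_mat:
  assumes "\<And>i. 0 \<le> d i"
  shows "psd (diag_mat (\<lambda>i. complex_of_real (d i)))"
proof -
  have "0 \<le> Re (cnj z * (complex_of_real (d i) * z))" for z i
    using assms[of i] by (simp add: mult.left_commute[of _ "d i"] flip: distrib_left)
  then show ?thesis
    by (auto simp: psd_def vec_eq_iff diag_mat_nth cquad_def diag_mat_apply intro!: sum_nonneg)
qed

lemma cquad_axis: "cquad A (axis i 1) = A $ i $ i"
  by (simp add: cquad_cinner cinner_axis_left matrix_nth_axis[symmetric])

lemma psd_diagonalization:
  assumes "psd A"
  obtains U d where "unitary U" "\<And>i. 0 \<le> d i"
    "A = U ** diag_mat (\<lambda>i. complex_of_real (d i)) ** cadj U"
proof -
  obtain U where U: "unitary U" and diag: "diag_cols UNIV (cadj U ** A ** U)"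
    using hermitian_unitary_diagonalization[OF psd_hermitian[OF assms]] by blast
  define D where "D = cadj U ** A ** U"
  define d where "d i = Re (D $ i $ i)" for i
  have "psd D" using psd_congruence[OF assms] by (simp add: D_def)
  have "0 \<le> d i" for i
    using \<open>psd D\<close> cquad_axis[of D i] unfolding psd_def d_def by metis
  moreover have "D = diag_mat (\<lambda>i. complex_of_real (d i))"
  proof -
    have "D $ i $ i = complex_of_real (d i)" for i
      using hermitian_entry[OF psd_hermitian[OF \<open>psd D\<close>], of i i]
      by (simp add: d_def complex_eq_iff)
    with diag show ?thesis by (auto simp: vec_eq_iff diag_mat_nth diag_cols_def D_def)
  qed
  moreover have "A = U ** D ** cadj U"
    using U by (simp add: D_def matrix_mul_assoc unitary_simps)
  ultimately show ?thesis using that U by blast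
qed

subsection \<open>Square roots\<close>

lemma psd_unitary_congruence_diag:
  "(\<And>i. 0 \<le> d i) \<Longrightarrow> psd (U ** diag_mat (\<lambda>i. complex_of_real (d i)) ** cadj U)"
  using psd_congruence[OF psd_diag_mat, of d "cadj U"] by simp

lemma psd_sqrt_exists:
  assumes "psd A"
  shows "\<exists>B. psd B \<and> B ** B = A"
proof -
  obtain U d where U: "unitary U" and d: "\<And>i. 0 \<le> d i"
    and A: "A = U ** diag_mat (\<lambda>i. complex_of_real (d i)) ** cadj U"
    using psd_diagonalization[OF assms] by blast
  define B where "B = U ** diag_mat (\<lambda>i. complex_of_real (sqrt (d i))) ** cadj U"
  have "B ** B = U ** (diag_mat (\<lambda>i. complex_of_real (sqrt (d i)))
      ** diag_mat (\<lambda>i. complex_of_real (sqrt (d i)))) ** cadj U"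
    using U by (simp add: B_def matrix_mul_assoc unitary_simps)
  also have "\<dots> = A"
    using d by (simp add: A diag_mat_mult flip: of_real_mult)
  finally show ?thesis
    using psd_unitary_congruence_diag[of "\<lambda>i. sqrt (d i)"] d by (auto simp: B_def)
qed

lemma commute_diag_sqrt:
  assumes nonneg: "\<And>i. 0 \<le> b i"
    and comm: "G ** diag_mat (\<lambda>i. complex_of_real (b i * b i))
      = diag_mat (\<lambda>i. complex_of_real (b i * b i)) ** G"
  shows "G ** diag_mat (\<lambda>i. complex_of_real (b i)) = diag_mat (\<lambda>i. complex_of_real (b i)) ** G"
proof -
  have "G $ i $ j * complex_of_real (b j) = complex_of_real (b i) * G $ i $ j" for i j
  proof (cases "G $ i $ j = 0")
    case False
    have "G $ i $ j * complex_of_real (b j * b j) = complex_of_real (b i * b i) * G $ i $ j"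
      using arg_cong[OF comm, of "\<lambda>M. M $ i $ j"]
      by (simp add: matrix_diag_mat_mult_nth diag_mat_matrix_mult_nth)
    then have "complex_of_real (b j * b j) = complex_of_real (b i * b i)"
      using False by (simp add: mult.commute)
    then have "b j * b j = b i * b i" using of_real_eq_iff by blast
    then have "b j = b i" using nonneg[of i] nonneg[of j]
      by (metis abs_of_nonneg real_sqrt_abs2 power2_eq_square)
    then show ?thesis by (simp add: mult.commute)
  qed simp
  then show ?thesis by (simp add: vec_eq_iff matrix_diag_mat_mult_nth diag_mat_matrix_mult_nth)
qed

lemma commute_psd_sqrt:
  assumes B: "psd B" and comm: "H ** (B ** B) = (B ** B) ** H"
  shows "H ** B = B ** H"
proof -
  obtain U b where U: "unitary U" and nonneg: "\<And>i. 0 \<le> b i"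
    and B_eq: "B = U ** diag_mat (\<lambda>i. complex_of_real (b i)) ** cadj U"
    using psd_diagonalization[OF B] by blast
  define E where "E = diag_mat (\<lambda>i. complex_of_real (b i))"
  define G where "G = cadj U ** H ** U"
  have H_eq: "H = U ** G ** cadj U"
    using U by (simp add: G_def matrix_mul_assoc unitary_simps)
  have "U ** (G ** (E ** E)) ** cadj U = U ** ((E ** E) ** G) ** cadj U"
    using comm U unfolding H_eq B_eq E_def[symmetric] by (simp add: matrix_mul_assoc unitary_simps)
  then have "cadj U ** (U ** (G ** (E ** E)) ** cadj U) ** U
      = cadj U ** (U ** ((E ** E) ** G) ** cadj U) ** U"
    by simp
  then have "G ** (E ** E) = (E ** E) ** G"
    using U by (simp add: matrix_mul_assoc unitary_simps)
  then have "G ** E = E ** G"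
    using commute_diag_sqrt[OF nonneg] by (simp add: E_def diag_mat_mult)
  then show ?thesis
    unfolding H_eq B_eq E_def[symmetric] using U
    by (simp add: matrix_mul_assoc unitary_simps) (metis matrix_mul_assoc)
qed

lemma psd_sqrt_unique:
  assumes B: "psd B" and C: "psd C" and sq: "B ** B = C ** C"
  shows "B = C"
proof -
  have "C ** B = B ** C"
    using commute_psd_sqrt[OF B, of C] by (simp add: sq matrix_mul_assoc)
  then have "(B + C) ** (B - C) = 0"
    by (simp add: matrix_diff_ldistrib matrix_add_rdistrib sq)
  have "(B - C) *v x = 0" for x
  proof -
    let ?y = "(B - C) *v x"
    have "(B + C) *v ?y = 0"
      using \<open>(B + C) ** (B - C) = 0\<close> by (simp add: matrix_vector_mul_assoc)
    moreover have "cquad B ?y + cquad C ?y = cinner ?y ((B + C) *v ?y)"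
      by (simp add: cquad_cinner matrix_vector_mult_add_rdistrib cinner_add_right)
    ultimately have "Re (cquad B ?y + cquad C ?y) = 0" by simp
    then have "Re (cquad B ?y) + Re (cquad C ?y) = 0" by (simp only: plus_complex.sel)
    moreover have "0 \<le> Re (cquad B ?y)" "0 \<le> Re (cquad C ?y)"
      using B C by (auto simp: psd_def)
    ultimately have "B *v ?y = 0" "C *v ?y = 0"
      using psd_cquad_zero_imp_kernel B C by (metis add_nonneg_eq_0_iff)+
    then have "cinner ?y ?y = 0"
      using hermitian_cinner[of "B - C" x ?y] B C
      by (simp add: psd_def cadj_diff matrix_vector_mult_diff_rdistrib)
    then show ?thesis by (simp add: cinner_self_eq_0)
  qed
  then have "B - C = 0" by (simp add: matrix_eq)
  then show ?thesis by simp
qed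

lemma msqrt_eqI: "psd B \<Longrightarrow> B ** B = A \<Longrightarrow> msqrt A = B"
  unfolding msqrt_def by (rule the_equality) (auto intro: psd_sqrt_unique)

lemma msqrt:
  assumes "psd A"
  shows psd_msqrt: "psd (msqrt A)" and msqrt_mult_self: "msqrt A ** msqrt A = A"
  using psd_sqrt_exists[OF assms] msqrt_eqI by metis+

lemma psd_mult_commute:
  assumes X: "psd X" and Y: "psd Y" and comm: "X ** Y = Y ** X"
  shows "psd (X ** Y)"
proof -
  define R where "R = msqrt X"
  have R: "psd R" "R ** R = X" using msqrt[OF X] by (auto simp: R_def)
  have "Y ** R = R ** Y" using commute_psd_sqrt[OF R(1), of Y] R(2) comm by simp
  then have "X ** Y = cadj R ** Y ** R"
    using R by (simp add: psd_def matrix_mul_assoc flip: R(2)) (simp add: matrix_mul_assoc[symmetric])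
  then show ?thesis using psd_congruence[OF Y] by simp
qed

lemma matrix_inv:
  assumes "invertible A"
  shows matrix_inv_right: "A ** matrix_inv A = mat 1"
    and matrix_inv_left: "matrix_inv A ** A = mat 1"
  using someI_ex[OF assms[unfolded invertible_def]] by (auto simp: matrix_inv_def)

lemma matrix_inv_cancel:
  assumes "invertible A"
  shows "X ** A ** matrix_inv A = X" "X ** matrix_inv A ** A = X"
  by (simp_all add: matrix_inv[OF assms] flip: matrix_mul_assoc)

lemma matrix_inv_unique:
  fixes A :: "'a::field^'n^'n"
  assumes "A ** B = mat 1"
  shows "matrix_inv A = B"
proof -
  have "B ** A = mat 1" using assms matrix_left_right_inverse by blast
  then have "invertible A" using assms invertible_def by blast
  have "matrix_inv A = matrix_inv A ** (A ** B)" by (simp add: assms)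
  also have "\<dots> = B" by (simp add: matrix_mul_assoc matrix_inv_left[OF \<open>invertible A\<close>])
  finally show ?thesis .
qed

lemma cadj_matrix_inv_hermitian:
  assumes "cadj R = R" "invertible R"
  shows "cadj (matrix_inv R) = matrix_inv R"
proof -
  have "R ** cadj (matrix_inv R) = mat 1"
    using arg_cong[OF matrix_inv_left[OF assms(2)], of cadj] assms(1) by (simp add: cadj_mult)
  then show ?thesis using matrix_inv_unique by metis
qed

lemma invertible_if_kernel_0:
  fixes A :: "complex^'n^'n"
  assumes "\<And>x. A *v x = 0 \<Longrightarrow> x = 0"
  shows "invertible A"
proof -
  have "inj ((*v) A)"
    by (rule injI) (metis assms eq_iff_diff_eq_0 matrix_vector_mult_diff_distrib)
  then have "det (matrix ((*v) A)) \<noteq> 0"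
    using det_nz_iff_inj_gen[OF matrix_vector_mul_linear_gen] by blast
  then show ?thesis by (simp add: invertible_det_nz)
qed

lemma invertible_kernel_0: "invertible (A :: complex^'n^'n) \<Longrightarrow> A *v x = 0 \<Longrightarrow> x = 0"
  by (metis inj_matrix_vector_mult injD matrix_vector_mult_0_right)

lemma pd_invertible: "pd A \<Longrightarrow> invertible A"
  by (rule invertible_if_kernel_0) (force simp: pd_def cquad_cinner)

lemma invertible_msqrt:
  assumes "pd A"
  shows "invertible (msqrt A)"
proof (rule invertible_if_kernel_0)
  fix x
  assume "msqrt A *v x = 0"
  then have "A *v x = 0"
    by (metis msqrt_mult_self[OF pd_imp_psd[OF assms]] matrix_vector_mul_assoc matrix_vector_mult_0_right)
  then show "x = 0" using invertible_kernel_0[OF pd_invertible[OF assms]] by blast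
qed

subsection \<open>The geometric mean of positive definite matrices\<close>

lemma gmean_pd_eqI:
  assumes P: "pd P" and Y: "psd Y" and riccati: "Y ** matrix_inv P ** Y = Q"
  shows "gmean_pd P Q = Y"
proof -
  define R where "R = msqrt P"
  have R: "psd R" "R ** R = P" "invertible R"
    using msqrt[OF pd_imp_psd[OF P]] invertible_msqrt[OF P] by (auto simp: R_def)
  define Ri where "Ri = matrix_inv R"
  have Ri: "R ** Ri = mat 1" "X ** Ri ** R = X" for X
    using matrix_inv_right[OF R(3)] matrix_inv_cancel[OF R(3)] by (simp_all add: Ri_def)
  have "cadj Ri = Ri"
    using cadj_matrix_inv_hermitian[OF psd_hermitian[OF R(1)] R(3)] by (simp add: Ri_def)
  then have "psd (Ri ** Y ** Ri)" using psd_congruence[OF Y, of Ri] by simp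
  moreover have "matrix_inv P = Ri ** Ri"
    by (rule matrix_inv_unique) (simp add: Ri_def matrix_mul_assoc matrix_inv_cancel[OF R(3)]
        matrix_inv_right[OF R(3)] flip: R(2))
  then have "(Ri ** Y ** Ri) ** (Ri ** Y ** Ri) = Ri ** Q ** Ri"
    by (simp add: riccati[symmetric] matrix_mul_assoc)
  ultimately have "msqrt (Ri ** Q ** Ri) = Ri ** Y ** Ri" by (rule msqrt_eqI)
  then have "gmean_pd P Q = R ** (Ri ** Y ** Ri) ** R"
    by (simp add: gmean_pd_def Let_def R_def Ri_def)
  also have "\<dots> = Y"
    by (simp add: matrix_mul_assoc Ri)
  finally show ?thesis .
qed

lemma commute_matrix_inv:
  assumes "invertible A" "A ** B = B ** A"
  shows "matrix_inv A ** B = B ** matrix_inv A"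
proof -
  have "matrix_inv A ** (A ** B) ** matrix_inv A = matrix_inv A ** (B ** A) ** matrix_inv A"
    by (simp add: assms(2))
  then show ?thesis
    by (simp add: matrix_mul_assoc matrix_inv[OF assms(1)] matrix_inv_cancel[OF assms(1)])
qed

lemma pd_congruence:
  assumes "pd A" "invertible T"
  shows "pd (cadj T ** A ** T)"
  using assms invertible_kernel_0[OF assms(2)]
  by (auto simp: pd_def cadj_mult matrix_mul_assoc cquad_congruence)

lemma one_plus_mult_one_minus:
  "(mat 1 + H) ** (mat 1 - H) = mat 1 - H ** (H :: complex^'n^'n)"
  "(mat 1 - H) ** (mat 1 + H) = mat 1 - H ** (H :: complex^'n^'n)"
  by (simp_all add: matrix_add_rdistrib matrix_add_ldistrib matrix_diff_ldistrib
      matrix_diff_rdistrib algebra_simps)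

lemma psd_one_minus_square:
  assumes "psd (mat 1 + H)" "psd (mat 1 - H)"
  shows "psd (mat 1 - H ** H)"
  using psd_mult_commute[OF assms] by (simp add: one_plus_mult_one_minus)

lemma gmean_pd_congruent_pair:
  fixes T H :: "complex^'n^'n"
  assumes T: "psd T" "invertible T" and plus: "pd (mat 1 + H)" and minus: "psd (mat 1 - H)"
  shows "gmean_pd (T ** (mat 1 + H) ** T) (T ** (mat 1 - H) ** T) =
    T ** msqrt (mat 1 - H ** H) ** T"
proof -
  define M where "M = msqrt (mat 1 - H ** H)"
  have M: "psd M" "M ** M = mat 1 - H ** H"
    using msqrt[OF psd_one_minus_square[OF pd_imp_psd[OF plus] minus]] by (simp_all add: M_def)
  have "H ** (M ** M) = (M ** M) ** H"
    by (simp add: M(2) matrix_diff_ldistrib matrix_diff_rdistrib matrix_mul_assoc)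
  then have "H ** M = M ** H" by (rule commute_psd_sqrt[OF M(1)])
  then have "(mat 1 + H) ** M = M ** (mat 1 + H)"
    by (simp add: matrix_add_rdistrib matrix_add_ldistrib)
  then have comm: "matrix_inv (mat 1 + H) ** M = M ** matrix_inv (mat 1 + H)"
    by (rule commute_matrix_inv[OF pd_invertible[OF plus]])
  have herm: "cadj T = T" using psd_hermitian[OF T(1)] .
  have P: "pd (T ** (mat 1 + H) ** T)"
    using pd_congruence[OF plus T(2)] herm by simp
  have inv: "matrix_inv (T ** (mat 1 + H) ** T) =
      matrix_inv T ** matrix_inv (mat 1 + H) ** matrix_inv T"
    by (rule matrix_inv_unique) (simp add: matrix_mul_assoc matrix_inv[OF T(2)]
        matrix_inv_cancel[OF T(2)] matrix_inv_cancel[OF pd_invertible[OF plus]])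
  have "(T ** M ** T) ** matrix_inv (T ** (mat 1 + H) ** T) ** (T ** M ** T) =
      T ** (matrix_inv (mat 1 + H) ** (M ** M)) ** T"
    by (simp add: inv matrix_mul_assoc matrix_inv_cancel[OF T(2)] comm)
  also have "\<dots> = T ** (mat 1 - H) ** T"
    by (simp add: M(2) flip: one_plus_mult_one_minus(1))
      (simp add: matrix_mul_assoc matrix_inv_left[OF pd_invertible[OF plus]])
  finally have "gmean_pd (T ** (mat 1 + H) ** T) (T ** (mat 1 - H) ** T) = T ** M ** T"
    using psd_congruence[OF M(1), of T] herm by (intro gmean_pd_eqI[OF P]) simp_all
  then show ?thesis by (simp add: M_def)
qed

lemma mRe_plus_i_mIm: "mRe J + mat \<i> ** mIm J = J"
  by (simp add: vec_eq_iff mat_matrix_mult_nth mRe_def mIm_def complex_eq_iff)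

lemma hermitian_transpose:
  assumes "cadj J = J"
  shows "transpose J = mRe J - mat \<i> ** mIm J"
proof -
  have "transpose J $ i $ j = cnj (J $ i $ j)" for i j
    using hermitian_entry[OF assms, of j i] by (simp add: transpose_def)
  then show ?thesis
    by (simp add: vec_eq_iff mat_matrix_mult_nth mRe_def mIm_def complex_eq_iff)
qed

lemma cquad_transpose: "cquad (transpose J) x = cquad J (\<chi> i. cnj (x $ i))"
proof -
  have "cquad (transpose J) x = (\<Sum>i\<in>UNIV. \<Sum>j\<in>UNIV. cnj (x $ i) * J $ j $ i * x $ j)"
    by (simp add: cquad_def matrix_vector_mult_def transpose_def sum_distrib_left mult.assoc)
  also have "\<dots> = (\<Sum>j\<in>UNIV. \<Sum>i\<in>UNIV. cnj (x $ i) * J $ j $ i * x $ j)"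
    by (rule sum.swap)
  also have "\<dots> = cquad J (\<chi> i. cnj (x $ i))"
    by (simp add: cquad_def matrix_vector_mult_def sum_distrib_left mult_ac)
  finally show ?thesis .
qed

lemma cadj_transpose_hermitian: "cadj J = J \<Longrightarrow> cadj (transpose J) = transpose J"
  by (simp add: vec_eq_iff transpose_def)

lemma psd_transpose: "psd J \<Longrightarrow> psd (transpose J)"
  by (simp add: psd_def cadj_transpose_hermitian cquad_transpose)

lemma pd_transpose: "pd J \<Longrightarrow> pd (transpose J)"
  by (auto simp: pd_def cadj_transpose_hermitian cquad_transpose vec_eq_iff)

definition rel_mIm :: "complex^'n^'n \<Rightarrow> complex^'n^'n" where
  "rel_mIm J = matrix_inv (msqrt (mRe J)) ** mIm J ** matrix_inv (msqrt (mRe J))"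

definition gmean_formula :: "complex^'n^'n \<Rightarrow> complex^'n^'n" where
  "gmean_formula J =
    msqrt (mRe J) ** msqrt (mat 1 + rel_mIm J ** rel_mIm J) ** msqrt (mRe J)"

lemma hermitian_rel_mIm_split:
  fixes J :: "complex^'n^'n"
  assumes J: "cadj J = J" and V: "pd (mRe J)"
  shows "J = msqrt (mRe J) ** (mat 1 + mat \<i> ** rel_mIm J) ** msqrt (mRe J)"
    and "transpose J = msqrt (mRe J) ** (mat 1 - mat \<i> ** rel_mIm J) ** msqrt (mRe J)"
proof -
  define T where "T = msqrt (mRe J)"
  have T: "T ** T = mRe J" "invertible T"
    using msqrt_mult_self[OF pd_imp_psd[OF V]] invertible_msqrt[OF V] by (simp_all add: T_def)
  have "T ** (mat \<i> ** rel_mIm J) ** T = mat \<i> ** mIm J"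
    using mat_commute[of T \<i>]
    by (simp add: rel_mIm_def T_def[symmetric] matrix_mul_assoc matrix_inv_cancel[OF T(2)])
  then show "J = T ** (mat 1 + mat \<i> ** rel_mIm J) ** T"
    and "transpose J = T ** (mat 1 - mat \<i> ** rel_mIm J) ** T"
    by (simp_all add: matrix_add_ldistrib matrix_add_rdistrib matrix_diff_ldistrib
        matrix_diff_rdistrib T(1) mRe_plus_i_mIm hermitian_transpose[OF J])
qed

lemma mat_i_mult_square: "(mat \<i> ** K) ** (mat \<i> ** K) = - (K ** (K :: complex^'n^'n))"
proof -
  have "(mat \<i> ** K) ** (mat \<i> ** K) = mat \<i> ** ((K ** mat \<i>) ** K)"
    by (simp add: matrix_mul_assoc)
  also have "\<dots> = mat \<i> ** (mat \<i> ** (K ** K))"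
    by (simp add: mat_commute[of K] matrix_mul_assoc)
  finally show ?thesis by (simp add: vec_eq_iff mat_matrix_mult_nth)
qed

lemma psd_one_pm_i_rel_mIm:
  fixes J :: "complex^'n^'n"
  assumes J: "psd J" and V: "pd (mRe J)"
  shows "psd (mat 1 + mat \<i> ** rel_mIm J)" "psd (mat 1 - mat \<i> ** rel_mIm J)"
proof -
  define T H where "T = msqrt (mRe J)" and "H = mat \<i> ** rel_mIm J"
  have J_split: "J = T ** (mat 1 + H) ** T" "transpose J = T ** (mat 1 - H) ** T"
    using hermitian_rel_mIm_split[OF psd_hermitian[OF J] V] by (simp_all add: T_def H_def)
  have T: "invertible T" "cadj T = T"
    using invertible_msqrt[OF V] psd_hermitian[OF psd_msqrt[OF pd_imp_psd[OF V]]]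
    by (simp_all add: T_def)
  have "cadj (matrix_inv T) = matrix_inv T"
    by (rule cadj_matrix_inv_hermitian[OF T(2,1)])
  then have unwrap: "cadj (matrix_inv T) ** (T ** X ** T) ** matrix_inv T = X" for X
    by (simp add: matrix_mul_assoc matrix_inv_left[OF T(1)] matrix_inv_cancel[OF T(1)])
  have "psd (mat 1 + H)"
    using psd_congruence[OF J, of "matrix_inv T"] by (simp only: J_split(1) unwrap)
  moreover have "psd (mat 1 - H)"
    using psd_congruence[OF psd_transpose[OF J], of "matrix_inv T"]
    by (simp only: J_split(2) unwrap)
  ultimately show "psd (mat 1 + mat \<i> ** rel_mIm J)" "psd (mat 1 - mat \<i> ** rel_mIm J)"
    by (simp_all add: H_def)
qed

lemma psd_one_plus_rel_mIm_square:
  "psd J \<Longrightarrow> pd (mRe J) \<Longrightarrow> psd (mat 1 + rel_mIm J ** rel_mIm J)"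
  using psd_one_minus_square[OF psd_one_pm_i_rel_mIm] by (simp add: mat_i_mult_square)

lemma gmean_pd_transpose:
  fixes J :: "complex^'n^'n"
  assumes J: "pd J" and V: "pd (mRe J)"
  shows "gmean_pd J (transpose J) = gmean_formula J"
proof -
  define T H where "T = msqrt (mRe J)" and "H = mat \<i> ** rel_mIm J"
  have J_split: "J = T ** (mat 1 + H) ** T" "transpose J = T ** (mat 1 - H) ** T"
    using hermitian_rel_mIm_split[OF psd_hermitian[OF pd_imp_psd[OF J]] V]
    by (simp_all add: T_def H_def)
  have T: "psd T" "invertible T"
    using psd_msqrt[OF pd_imp_psd[OF V]] invertible_msqrt[OF V] by (simp_all add: T_def)
  have "cadj (matrix_inv T) = matrix_inv T"
    by (rule cadj_matrix_inv_hermitian[OF psd_hermitian[OF T(1)] T(2)])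
  then have "cadj (matrix_inv T) ** J ** matrix_inv T = mat 1 + H"
    by (simp only: J_split(1)) (simp add: matrix_mul_assoc matrix_inv_left[OF T(2)]
        matrix_inv_cancel[OF T(2)])
  moreover have "invertible (matrix_inv T)"
    using matrix_inv_left[OF T(2)] invertible_right_inverse by blast
  ultimately have "pd (mat 1 + H)" using pd_congruence[OF J, of "matrix_inv T"] by simp
  moreover have "psd (mat 1 - H)"
    using psd_one_pm_i_rel_mIm(2)[OF pd_imp_psd[OF J] V] by (simp add: H_def)
  ultimately have "gmean_pd (T ** (mat 1 + H) ** T) (T ** (mat 1 - H) ** T) =
      T ** msqrt (mat 1 - H ** H) ** T"
    by (rule gmean_pd_congruent_pair[OF T])
  then have "gmean_pd J (transpose J) = T ** msqrt (mat 1 - H ** H) ** T"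
    by (simp only: J_split[symmetric])
  then show ?thesis by (simp add: gmean_formula_def H_def T_def mat_i_mult_square)
qed

subsection \<open>Continuity\<close>

lemma tendsto_matrix_mult:
  fixes f g :: "'a \<Rightarrow> 'b::real_normed_field^'n^'n"
  assumes "(f \<longlongrightarrow> A) F" "(g \<longlongrightarrow> B) F"
  shows "((\<lambda>x. f x ** g x) \<longlongrightarrow> A ** B) F"
  unfolding matrix_matrix_mult_def
  by (intro tendsto_vec_lambda tendsto_sum tendsto_mult tendsto_vec_nth assms)

lemma continuous_on_matrix_mult:
  fixes f g :: "'a::topological_space \<Rightarrow> 'b::real_normed_field^'n^'n"
  shows "continuous_on S f \<Longrightarrow> continuous_on S g \<Longrightarrow> continuous_on S (\<lambda>x. f x ** g x)"
  by (auto simp: continuous_on_def intro: tendsto_matrix_mult)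

lemma tendsto_det:
  fixes f :: "'a \<Rightarrow> 'b::real_normed_field^'n^'n"
  assumes "(f \<longlongrightarrow> A) F"
  shows "((\<lambda>x. det (f x)) \<longlongrightarrow> det A) F"
  unfolding det_def
  by (intro tendsto_sum tendsto_mult tendsto_const tendsto_prod tendsto_vec_nth assms)

lemma matrix_inv_cramer:
  fixes A :: "'a::field^'n^'n"
  assumes "invertible A"
  shows "matrix_inv A = (\<chi> k j. det (\<chi> a b. if b = k then axis j 1 $ a else A $ a $ b) / det A)"
proof -
  have "det A \<noteq> 0" using assms invertible_det_nz by blast
  have "matrix_inv A $ k $ j = det (\<chi> a b. if b = k then axis j 1 $ a else A $ a $ b) / det A"
    for k j
  proof -
    have "A *v (matrix_inv A *v axis j 1) = axis j 1"
      by (simp add: matrix_vector_mul_assoc matrix_inv_right[OF assms])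
    then show ?thesis
      using cramer[OF \<open>det A \<noteq> 0\<close>] by (simp add: matrix_nth_axis[of "matrix_inv A"])
  qed
  then show ?thesis by (simp add: vec_eq_iff)
qed

lemma tendsto_matrix_inv:
  fixes f :: "'a \<Rightarrow> 'b::real_normed_field^'n^'n"
  assumes f: "(f \<longlongrightarrow> A) F" and A: "invertible A"
  shows "((\<lambda>x. matrix_inv (f x)) \<longlongrightarrow> matrix_inv A) F"
proof -
  have "det A \<noteq> 0" using A invertible_det_nz by blast
  then have "eventually (\<lambda>x. det (f x) \<noteq> 0) F"
    using tendsto_det[OF f] tendsto_imp_eventually_ne by blast
  then have "eventually (\<lambda>x. (\<chi> k j. det (\<chi> a b. if b = k then axis j 1 $ a else f x $ a $ b)
      / det (f x)) = matrix_inv (f x)) F"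
    by eventually_elim (simp add: matrix_inv_cramer invertible_det_nz)
  moreover have "((\<lambda>x. \<chi> k j. det (\<chi> a b. if b = k then axis j 1 $ a else f x $ a $ b)
      / det (f x)) \<longlongrightarrow> matrix_inv A) F"
    unfolding matrix_inv_cramer[OF A]
  proof (intro tendsto_vec_lambda tendsto_divide tendsto_det f \<open>det A \<noteq> 0\<close>)
    fix k j a b :: 'n
    show "((\<lambda>x. if b = k then axis j 1 $ a else f x $ a $ b) \<longlongrightarrow>
        (if b = k then axis j 1 $ a else A $ a $ b)) F"
      by (cases "b = k") (simp_all add: tendsto_vec_nth f)
  qed
  ultimately show ?thesis by (rule Lim_transform_eventually[rotated])
qed

lemma closed_psd: "closed {A :: complex^'n^'n. psd A}"
proof -
  have "{A :: complex^'n^'n. psd A} = {A. cadj A = A} \<inter> (\<Inter>x. {A. 0 \<le> Re (cquad A x)})"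
    by (auto simp: psd_def)
  also have "closed \<dots>"
  proof (intro closed_Int closed_INT ballI)
    have "continuous_on UNIV (\<lambda>A :: complex^'n^'n. cadj A)"
      unfolding cadj_def
      by (intro continuous_on_vec_lambda continuous_on_cnj continuous_on_component continuous_on_id)
    then show "closed {A :: complex^'n^'n. cadj A = A}"
      by (intro closed_Collect_eq continuous_on_id)
    fix x :: "complex^'n"
    have "continuous_on UNIV (\<lambda>A :: complex^'n^'n. Re (cquad A x))"
      unfolding cquad_def matrix_vector_mult_def
      by (intro continuous_on_Re continuous_on_sum continuous_on_mult continuous_on_const
          continuous_on_component continuous_on_id continuous_on_vec_lambda)
    then show "closed {A :: complex^'n^'n. 0 \<le> Re (cquad A x)}"
      by (intro closed_Collect_le continuous_on_const)
  qed
  finally show ?thesis .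
qed

lemma hermitian_norm_row_sq:
  assumes "cadj B = B"
  shows "(norm (B $ i))\<^sup>2 = Re ((B ** B) $ i $ i)"
proof -
  have "(B ** B) $ i $ i = (\<Sum>k\<in>UNIV. B $ i $ k * cnj (B $ i $ k))"
    unfolding matrix_matrix_mult_def vec_lambda_beta
    by (intro sum.cong refl) (use hermitian_entry[OF assms] in metis)
  also have "\<dots> = cinner (B $ i) (B $ i)" by (simp add: cinner_def mult.commute)
  finally show ?thesis by (simp add: norm_sq_cinner)
qed

lemma norm_msqrt_le:
  fixes A :: "complex^'n^'n"
  assumes "psd A"
  shows "norm (msqrt A) \<le> sqrt (real CARD('n) * norm A)"
proof -
  have "(norm (msqrt A))\<^sup>2 = (\<Sum>i\<in>UNIV. (norm (msqrt A $ i))\<^sup>2)"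
    by (simp add: norm_vec_def L2_set_def sum_nonneg)
  also have "\<dots> = (\<Sum>i\<in>UNIV. Re (A $ i $ i))"
    using hermitian_norm_row_sq[OF psd_hermitian[OF psd_msqrt[OF assms]]]
    by (simp add: msqrt_mult_self[OF assms])
  also have "\<dots> \<le> (\<Sum>i\<in>(UNIV :: 'n set). norm A)"
  proof (rule sum_mono)
    fix i
    have "Re (A $ i $ i) \<le> norm (A $ i $ i)" by (rule complex_Re_le_cmod)
    also have "\<dots> \<le> norm (A $ i)" by (rule Finite_Cartesian_Product.norm_nth_le)
    also have "\<dots> \<le> norm A" by (rule Finite_Cartesian_Product.norm_nth_le)
    finally show "Re (A $ i $ i) \<le> norm A" .
  qed
  finally show ?thesis by (simp add: real_le_rsqrt)
qed

text \<open>The graph of msqrt is closed because the square root is characterised by closed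
  conditions, and msqrt is bounded on bounded sets, so it is continuous.\<close>

lemma continuous_on_msqrt: "continuous_on {A :: complex^'n^'n. psd A \<and> norm A \<le> r} msqrt"
proof (rule continuous_from_closed_graph[where T = "cball 0 (sqrt (real CARD('n) * r))"])
  show "compact (cball (0 :: complex^'n^'n) (sqrt (real CARD('n) * r)))" by simp
  show "msqrt \<in> {A :: complex^'n^'n. psd A \<and> norm A \<le> r} \<rightarrow> cball 0 (sqrt (real CARD('n) * r))"
  proof
    fix A :: "complex^'n^'n"
    assume A: "A \<in> {A. psd A \<and> norm A \<le> r}"
    then have "norm (msqrt A) \<le> sqrt (real CARD('n) * r)"
      using norm_msqrt_le[of A] by (auto intro: order_trans real_sqrt_le_mono mult_left_mono)
    then show "msqrt A \<in> cball 0 (sqrt (real CARD('n) * r))" by simp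
  qed
  have "(\<lambda>A. (A, msqrt A)) ` {A :: complex^'n^'n. psd A \<and> norm A \<le> r} =
      {p. psd (fst p) \<and> norm (fst p) \<le> r \<and> psd (snd p) \<and> snd p ** snd p = fst p}"
    by (auto simp: msqrt msqrt_eqI image_iff intro!: exI[of _ "fst _"])
  moreover have "closed {p :: (complex^'n^'n) \<times> (complex^'n^'n).
      psd (fst p) \<and> norm (fst p) \<le> r \<and> psd (snd p) \<and> snd p ** snd p = fst p}"
    using closed_vimage[OF closed_psd continuous_on_fst[OF continuous_on_id]]
      closed_vimage[OF closed_psd continuous_on_snd[OF continuous_on_id]]
    by (intro closed_Collect_conj closed_Collect_le closed_Collect_eq continuous_on_matrix_mult
        continuous_on_fst continuous_on_snd continuous_on_norm continuous_on_id
        continuous_on_const) (simp_all add: vimage_def)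
  ultimately show "closed ((\<lambda>A. (A, msqrt A)) ` {A :: complex^'n^'n. psd A \<and> norm A \<le> r})"
    by simp
qed

lemma tendsto_msqrt:
  fixes f :: "'a \<Rightarrow> complex^'n^'n"
  assumes f: "(f \<longlongrightarrow> A) F" and A: "psd A" and psd: "eventually (\<lambda>x. psd (f x)) F"
  shows "((\<lambda>x. msqrt (f x)) \<longlongrightarrow> msqrt A) F"
proof -
  have "eventually (\<lambda>x. dist (f x) A < 1) F"
    using f by (rule tendstoD) simp
  with psd have "eventually (\<lambda>x. f x \<in> {B. psd B \<and> norm B \<le> norm A + 1}) F"
  proof eventually_elim
    case (elim x)
    have "norm (f x) \<le> norm A + norm (f x - A)" by (rule norm_triangle_sub)
    with elim show ?case by (simp add: dist_norm)
  qed
  moreover have "A \<in> {B. psd B \<and> norm B \<le> norm A + 1}" using A by simp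
  ultimately show ?thesis
    using continuous_on_tendsto_compose[OF continuous_on_msqrt f] by blast
qed

subsection \<open>Approximation by positive definite matrices\<close>

lemma psd_plus_mat_pd:
  fixes A :: "complex^'n^'n"
  assumes "psd A" "e > 0"
  shows "pd (A + mat (complex_of_real e))"
proof -
  have "(A + mat c) *v x = A *v x + c *s x" for c x
    by (simp add: matrix_vector_mult_add_rdistrib mat_matrix_vector_mult)
  then have "cquad (A + mat (complex_of_real e)) x = cquad A x + complex_of_real e * cinner x x"
    for x by (simp add: cquad_cinner cinner_add_right cinner_scaleC_right)
  moreover have "0 < e * Re (cinner x x)" if "x \<noteq> 0" for x
    using assms(2) cinner_self_pos[OF that] by simp
  ultimately show ?thesis
    using assms(1) by (auto simp: pd_def psd_def cadj_add intro!: add_nonneg_pos)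
qed

lemma mRe_plus_mat: "mRe (J + mat (complex_of_real e)) = mRe J + mat (complex_of_real e)"
  by (simp add: vec_eq_iff mRe_def mat_def)

lemma mIm_plus_mat: "mIm (J + mat (complex_of_real e)) = mIm J"
  by (simp add: vec_eq_iff mIm_def mat_def)

lemma transpose_plus_mat: "transpose (J + mat c) = transpose J + mat c"
  by (simp add: vec_eq_iff transpose_def mat_def)

lemma gmean_pd_transpose_plus_mat:
  fixes J :: "complex^'n^'n"
  assumes "psd J" "pd (mRe J)" "e > 0"
  shows "gmean_pd (J + mat (complex_of_real e)) (transpose J + mat (complex_of_real e)) =
    gmean_formula (J + mat (complex_of_real e))"
proof -
  have "pd (J + mat (complex_of_real e))" "pd (mRe (J + mat (complex_of_real e)))"
    using psd_plus_mat_pd[OF assms(1,3)] psd_plus_mat_pd[OF pd_imp_psd[OF assms(2)] assms(3)]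
    by (simp_all add: mRe_plus_mat)
  from gmean_pd_transpose[OF this] show ?thesis by (simp add: transpose_plus_mat)
qed

lemma tendsto_plus_mat:
  "((\<lambda>e. A + mat (complex_of_real e)) \<longlongrightarrow> (A :: complex^'n^'n)) (at_right 0)"
proof -
  have "mat (complex_of_real e) = e *\<^sub>R (mat 1 :: complex^'n^'n)" for e
    by (simp add: vec_eq_iff mat_def scaleR_conv_of_real[where 'a = complex])
  moreover have "((\<lambda>e. A + e *\<^sub>R (mat 1 :: complex^'n^'n)) \<longlongrightarrow> A + 0 *\<^sub>R mat 1) (at_right 0)"
    by (intro tendsto_intros)
  ultimately show ?thesis by simp
qed

lemma tendsto_gmean_formula:
  fixes J :: "complex^'n^'n"
  assumes J: "psd J" and V: "pd (mRe J)"
  shows "((\<lambda>e. gmean_formula (J + mat (complex_of_real e))) \<longlongrightarrow> gmean_formula J) (at_right 0)"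
proof -
  let ?Je = "\<lambda>e. J + mat (complex_of_real e)"
  have pos: "eventually (\<lambda>e. e > 0) (at_right (0::real))"
    by (rule eventually_at_right_less)
  have pd_shift: "eventually (\<lambda>e. pd (?Je e) \<and> pd (mRe (?Je e))) (at_right 0)"
    using pos by eventually_elim (simp add: psd_plus_mat_pd J pd_imp_psd[OF V] mRe_plus_mat)
  have Vh: "((\<lambda>e. msqrt (mRe (?Je e))) \<longlongrightarrow> msqrt (mRe J)) (at_right 0)"
    using pd_shift
    by (auto simp: mRe_plus_mat intro!: tendsto_msqrt tendsto_plus_mat pd_imp_psd[OF V]
        elim: eventually_mono dest: pd_imp_psd)
  have "((\<lambda>e. rel_mIm (?Je e)) \<longlongrightarrow> rel_mIm J) (at_right 0)"
    unfolding rel_mIm_def mIm_plus_mat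
    by (intro tendsto_matrix_mult tendsto_matrix_inv Vh tendsto_const invertible_msqrt V)
  then have "((\<lambda>e. msqrt (mat 1 + rel_mIm (?Je e) ** rel_mIm (?Je e)))
      \<longlongrightarrow> msqrt (mat 1 + rel_mIm J ** rel_mIm J)) (at_right 0)"
    using pd_shift
    by (auto intro!: tendsto_msqrt tendsto_add tendsto_const tendsto_matrix_mult
        psd_one_plus_rel_mIm_square J V elim: eventually_mono dest: pd_imp_psd)
  then show ?thesis
    unfolding gmean_formula_def by (intro tendsto_matrix_mult Vh)
qed

theorem lemma12:
  fixes J :: "complex^'n^'n"
  assumes "psd J"
    and "pd (mRe J)"
  shows "gmean J (transpose J) =
    (let V = mRe J; S = mIm J; Vh = msqrt V; Vhi = matrix_inv Vh;
         K = Vhi ** S ** Vhi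
     in Vh ** msqrt (mat 1 + K ** K) ** Vh)"
proof -
  have "gmean J (transpose J) = gmean_formula J"
  proof (cases "pd J")
    case True
    then show ?thesis
      using gmean_pd_transpose[OF True assms(2)] pd_transpose[OF True] by (simp add: gmean_def)
  next
    case False
    have "eventually (\<lambda>e. gmean_formula (J + mat (complex_of_real e)) =
        gmean_pd (J + mat (complex_of_real e)) (transpose J + mat (complex_of_real e)))
        (at_right 0)"
      using eventually_at_right_less
      by eventually_elim (simp add: gmean_pd_transpose_plus_mat assms)
    with tendsto_gmean_formula[OF assms] have "((\<lambda>e. gmean_pd (J + mat (complex_of_real e))
        (transpose J + mat (complex_of_real e))) \<longlongrightarrow> gmean_formula J) (at_right 0)"
      by (rule Lim_transform_eventually)
    then show ?thesis using False by (simp add: gmean_def tendsto_Lim)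
  qed
  then show ?thesis by (simp add: gmean_formula_def rel_mIm_def Let_def)
qed

end
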